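(* Let $G$ be a simple 2-connected plane graph whose unbounded face $p_\infty$ has $V_\infty$ vertices. Let $(a,b)$ be an admissible state such that (1) $b_v=b_{v'}=1$ for some edge $vv'$ on the boundary of $p_\infty$; (2) $a_p+b_p=0$ for every bounded face $p$; (3) $(b_{v_1}-b_p)(b_{v_2}-b_p)=0$ for every bounded face $p$ and every edge $v_1v_2$ on the boundary of $p$. Then $b_w\ge1$ for every vertex $w$, $a_p=-1$ for every bounded face $p$, and $B(a,b)\ge 2+V_\infty$.
   Context: A simple 2-connected plane graph $G$ is a simple 2-connected planar graph with a fixed embedding in the plane, so every face is bounded by a cycle. For a face $p$, $l(p)$ is the number of edges on its boundary and $v\in p$ means $v$ lies on the boundary of $p$. An admissible state $(a,b)$ assigns an integer $a_p$ to each bounded face $p$ and an integer $b_v$ to each vertex $v$ such that $a_p+b_v\ge 0$ whenever $p$ is bounded and $v\in p$, and $b_v\ge0$ for every vertex $v$ on $p_\infty$. For a bounded face $p$, $b_p=\min_{v\in p}b_v$. $B(a,b)=2\sum_{v}b_v+\sum_p (l(p)-2)a_p$, with $p$ over bounded faces and $v$ over all vertices. *)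

theory Defs
  imports Main
begin

text \<open>
  The faces are indexed by a finite set F; each face f has a boundary cycle bd f, a list
  of vertices in cyclic order (consistently oriented).  pinf is the unbounded face.
\<close>

definition face_edge :: "'v list \<Rightarrow> 'v \<Rightarrow> 'v \<Rightarrow> bool" where
  "face_edge c u v \<longleftrightarrow>
     (\<exists>i < length c. c ! i = u \<and> c ! ((i + 1) mod length c) = v)"

definition face_corner :: "'v list \<Rightarrow> 'v \<Rightarrow> 'v \<Rightarrow> 'v \<Rightarrow> bool" where
  "face_corner c u v w \<longleftrightarrow>
     (\<exists>i < length c. c ! i = u \<and> c ! ((i + 1) mod length c) = v
                    \<and> c ! ((i + 2) mod length c) = w)"

definition pverts :: "'f set \<Rightarrow> ('f \<Rightarrow> 'v list) \<Rightarrow> 'v set" where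
  "pverts F bd = (\<Union>f\<in>F. set (bd f))"

definition darts :: "'f set \<Rightarrow> ('f \<Rightarrow> 'v list) \<Rightarrow> ('v \<times> 'v) set" where
  "darts F bd = {(u, v). \<exists>f\<in>F. face_edge (bd f) u v}"

definition pedges :: "'f set \<Rightarrow> ('f \<Rightarrow> 'v list) \<Rightarrow> 'v set set" where
  "pedges F bd = {{u, v} | u v. (u, v) \<in> darts F bd}"

definition rot_rel :: "'f set \<Rightarrow> ('f \<Rightarrow> 'v list) \<Rightarrow> 'v \<Rightarrow> ('v \<times> 'v) set" where
  "rot_rel F bd v = {(u, w). \<exists>f\<in>F. face_corner (bd f) u v w}"

definition conn_on :: "'f set \<Rightarrow> ('f \<Rightarrow> 'v list) \<Rightarrow> 'v set \<Rightarrow> bool" where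
  "conn_on F bd S \<longleftrightarrow>
     (\<forall>u\<in>S. \<forall>w\<in>S. (u, w) \<in> ({(x, y). (x, y) \<in> darts F bd \<and> x \<in> S \<and> y \<in> S})\<^sup>*)"

definition plane_2conn :: "'f set \<Rightarrow> ('f \<Rightarrow> 'v list) \<Rightarrow> 'f \<Rightarrow> bool" where
  "plane_2conn F bd pinf \<longleftrightarrow>
     finite F \<and> pinf \<in> F
   \<comment> \<open>every face is bounded by a cycle\<close>
   \<and> (\<forall>f\<in>F. distinct (bd f) \<and> length (bd f) \<ge> 3)
   \<comment> \<open>each directed dart lies on exactly one face (this also forces simplicity)\<close>
   \<and> (\<forall>f\<in>F. \<forall>g\<in>F. \<forall>u v. face_edge (bd f) u v \<and> face_edge (bd g) u v \<longrightarrow> f = g)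
   \<comment> \<open>each edge borders two faces, traversed in opposite directions\<close>
   \<and> (\<forall>u v. (u, v) \<in> darts F bd \<longrightarrow> (v, u) \<in> darts F bd)
   \<comment> \<open>the rotation around each vertex is a single cycle (no pinched vertices)\<close>
   \<and> (\<forall>v u u'. (u, v) \<in> darts F bd \<and> (u', v) \<in> darts F bd
                 \<longrightarrow> (u, u') \<in> (rot_rel F bd v)\<^sup>*)
   \<comment> \<open>2-connected\<close>
   \<and> card (pverts F bd) \<ge> 3
   \<and> conn_on F bd (pverts F bd)
   \<and> (\<forall>x\<in>pverts F bd. conn_on F bd (pverts F bd - {x}))
   \<comment> \<open>Euler's formula: the surface is the sphere (plane)\<close>
   \<and> int (card (pverts F bd)) - int (card (pedges F bd)) + int (card F) = 2"

definition admissible ::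
  "'f set \<Rightarrow> ('f \<Rightarrow> 'v list) \<Rightarrow> 'f \<Rightarrow> ('f \<Rightarrow> int) \<Rightarrow> ('v \<Rightarrow> int) \<Rightarrow> bool" where
  "admissible F bd pinf a b \<longleftrightarrow>
     (\<forall>p\<in>F - {pinf}. \<forall>v\<in>set (bd p). a p + b v \<ge> 0)
   \<and> (\<forall>v\<in>set (bd pinf). b v \<ge> 0)"

definition bface :: "('f \<Rightarrow> 'v list) \<Rightarrow> ('v \<Rightarrow> int) \<Rightarrow> 'f \<Rightarrow> int" where
  "bface bd b p = Min (b ` set (bd p))"

definition Bval ::
  "'f set \<Rightarrow> ('f \<Rightarrow> 'v list) \<Rightarrow> 'f \<Rightarrow> ('f \<Rightarrow> int) \<Rightarrow> ('v \<Rightarrow> int) \<Rightarrow> int" where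
  "Bval F bd pinf a b =
     2 * (\<Sum>v\<in>pverts F bd. b v) + (\<Sum>p\<in>F - {pinf}. (int (length (bd p)) - 2) * a p)"

end

theory Submission
  imports Defs
begin

text \<open>
  Let m be the minimum of b. Condition (3) says that every edge of a bounded face p has an
  endpoint with value b_p. Call a vertex good if every bounded face through it has b_p = m.
  Goodness spreads along edges: if w is good and its neighbour z has b_z > m, then b_w = m by
  (3) on a bounded face containing the edge wz; walking around z through the corners of bounded
  faces (all corners but at most one, and the rotation at z is a single cycle), (3) forces every
  neighbour of z to have value m, so every bounded face at z contains a vertex of value m.
  By connectivity all bounded faces have b_p = m, and the outer edge with b = 1 at both ends
  lies on a bounded face, so m = 1. Hence a_p = -1, and with Euler's formula
  B = 2 \<Sum> b_v - \<Sum> (l(p) - 2) \<ge> 2 |V| - (2 |V| - 2 - V\<infinity>).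
\<close>

lemma Suc_mod_neq_self: "(i::nat) < n \<Longrightarrow> 2 \<le> n \<Longrightarrow> (i + 1) mod n \<noteq> i"
  by (auto simp: mod_Suc)

lemma Suc_Suc_mod_neq_self: "(i::nat) < n \<Longrightarrow> 3 \<le> n \<Longrightarrow> (i + 2) mod n \<noteq> i"
  by (auto simp: mod_Suc)

lemma Suc_mod_inj: "(i::nat) < n \<Longrightarrow> j < n \<Longrightarrow> (i + 1) mod n = (j + 1) mod n \<Longrightarrow> i = j"
  by (auto simp: mod_Suc split: if_splits)

lemma mod_length_less: "i < length xs \<Longrightarrow> k mod length xs < length xs"
  by (metis gr0I mod_less_divisor not_less0)

lemma face_edge_mem: "face_edge c u v \<Longrightarrow> u \<in> set c \<and> v \<in> set c"
  unfolding face_edge_def by (metis length_pos_if_in_set mod_less_divisor nth_mem)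

lemma face_edge_neq:
  assumes "distinct c" "length c \<ge> 3" "face_edge c u v"
  shows "u \<noteq> v"
proof -
  obtain i where i: "i < length c" "c ! i = u" "c ! ((i + 1) mod length c) = v"
    using assms(3) unfolding face_edge_def by blast
  have "(i + 1) mod length c \<noteq> i" using Suc_mod_neq_self[OF i(1)] assms(2) by simp
  moreover have "(i + 1) mod length c < length c" using i(1) by (rule mod_length_less)
  ultimately show ?thesis using i assms(1) by (metis nth_eq_iff_index_eq)
qed

lemma face_edge_not_reverse:
  assumes "distinct c" "length c \<ge> 3" "face_edge c u v"
  shows "\<not> face_edge c v u"
proof
  assume "face_edge c v u"
  then obtain j where j: "j < length c" "c ! j = v" "c ! ((j + 1) mod length c) = u"
    unfolding face_edge_def by blast
  obtain i where i: "i < length c" "c ! i = u" "c ! ((i + 1) mod length c) = v"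
    using assms(3) unfolding face_edge_def by blast
  have "(i + 1) mod length c < length c" "(j + 1) mod length c < length c"
    using i(1) by (rule mod_length_less)+
  then have "j = (i + 1) mod length c" "i = (j + 1) mod length c"
    using i j assms(1) by (metis nth_eq_iff_index_eq)+
  then have "(i + 2) mod length c = i"
    by (metis Suc_eq_plus1 add_2_eq_Suc' mod_Suc_eq)
  then show False using Suc_Suc_mod_neq_self i(1) assms(2) by blast
qed

lemma face_corner_face_edges:
  assumes "face_corner c u v w"
  shows "face_edge c u v" "face_edge c v w"
proof -
  obtain i where i: "i < length c" "c ! i = u" "c ! ((i + 1) mod length c) = v"
    "c ! ((i + 2) mod length c) = w"
    using assms unfolding face_corner_def by blast
  then show "face_edge c u v" unfolding face_edge_def by blast
  have "(i + 1) mod length c < length c" "c ! (((i + 1) mod length c + 1) mod length c) = w"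
    using i by (simp_all add: mod_length_less mod_Suc_eq)
  then show "face_edge c v w" unfolding face_edge_def using i(3) by blast
qed

lemma face_corner_unique:
  assumes "distinct c" "face_corner c u v w" "face_corner c u' v w'"
  shows "u = u' \<and> w = w'"
proof -
  obtain i where i: "i < length c" "c ! i = u" "c ! ((i + 1) mod length c) = v"
    "c ! ((i + 2) mod length c) = w"
    using assms(2) unfolding face_corner_def by blast
  obtain j where j: "j < length c" "c ! j = u'" "c ! ((j + 1) mod length c) = v"
    "c ! ((j + 2) mod length c) = w'"
    using assms(3) unfolding face_corner_def by blast
  have "(i + 1) mod length c < length c" "(j + 1) mod length c < length c"
    using i(1) by (rule mod_length_less)+
  then have "(i + 1) mod length c = (j + 1) mod length c"
    using i(3) j(3) assms(1) by (metis nth_eq_iff_index_eq)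
  then have "i = j" using i(1) j(1) by (rule Suc_mod_inj[rotated 2])
  then show ?thesis using i j by simp
qed

lemma face_corner_exists:
  assumes "v \<in> set c"
  shows "\<exists>u w. face_corner c u v w"
proof -
  obtain i where i: "i < length c" "c ! i = v" using assms by (metis in_set_conv_nth)
  define j where "j = (if i = 0 then length c - 1 else i - 1)"
  have j: "j < length c" "(j + 1) mod length c = i"
    using i(1) unfolding j_def by auto
  then have "(j + 2) mod length c = (i + 1) mod length c"
    by (metis Suc_eq_plus1 add_2_eq_Suc' mod_Suc_eq)
  then have "face_corner c (c ! j) v (c ! ((i + 1) mod length c))"
    unfolding face_corner_def using i(2) j by auto
  then show ?thesis by blast
qed

lemma card_face_edges:
  assumes "distinct c"
  shows "card {(u, v). face_edge c u v} = length c"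
proof -
  have "{(u, v). face_edge c u v} = (\<lambda>i. (c ! i, c ! ((i + 1) mod length c))) ` {..<length c}"
    unfolding face_edge_def by auto
  moreover have "inj_on (\<lambda>i. (c ! i, c ! ((i + 1) mod length c))) {..<length c}"
    using assms by (auto simp: inj_on_def nth_eq_iff_index_eq)
  ultimately show ?thesis by (simp add: card_image)
qed

lemma finite_face_edges: "finite {(u, v). face_edge c u v}"
  by (rule finite_subset[of _ "set c \<times> set c"]) (auto dest: face_edge_mem)

lemma card_darts:
  assumes "finite F" "\<forall>f\<in>F. distinct (bd f)"
    and "\<forall>f\<in>F. \<forall>g\<in>F. \<forall>u v. face_edge (bd f) u v \<and> face_edge (bd g) u v \<longrightarrow> f = g"
  shows "card (darts F bd) = (\<Sum>f\<in>F. length (bd f))"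
proof -
  have "darts F bd = (\<Union>f\<in>F. {(u, v). face_edge (bd f) u v})"
    unfolding darts_def by auto
  also have "card \<dots> = (\<Sum>f\<in>F. card {(u, v). face_edge (bd f) u v})"
    using assms(1,3) by (intro card_UN_disjoint) (auto intro: finite_face_edges)
  also have "\<dots> = (\<Sum>f\<in>F. length (bd f))"
    using assms(2) by (intro sum.cong) (simp_all add: card_face_edges)
  finally show ?thesis .
qed

lemma card_sym_irrefl_rel:
  assumes "finite D" "\<forall>u v. (u, v) \<in> D \<longrightarrow> (v, u) \<in> D" "\<forall>u v. (u, v) \<in> D \<longrightarrow> u \<noteq> v"
  shows "card D = 2 * card {{u, v} | u v. (u, v) \<in> D}"
proof -
  let ?E = "{{u, v} | u v. (u, v) \<in> D}"
  let ?edge = "\<lambda>(u, v). {u, v}"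
  have "?E = ?edge ` D" by auto
  then have "finite ?E" using assms(1) by simp
  have "D = (\<Union>e\<in>?E. {d\<in>D. ?edge d = e})" by auto
  also have "card \<dots> = (\<Sum>e\<in>?E. card {d\<in>D. ?edge d = e})"
    using \<open>finite ?E\<close> assms(1) by (intro card_UN_disjoint) auto
  also have "\<dots> = (\<Sum>e\<in>?E. 2)"
  proof (rule sum.cong)
    fix e assume "e \<in> ?E"
    then obtain u v where e: "e = {u, v}" "(u, v) \<in> D" by auto
    then have "{d\<in>D. ?edge d = e} = {(u, v), (v, u)}"
      using assms(2) by (auto simp: doubleton_eq_iff)
    then show "card {d\<in>D. ?edge d = e} = 2" using assms(3) e(2) by simp
  qed simp
  finally show ?thesis by simp
qed

lemma rtrancl_Diff_pair_cases:
  assumes "(x, y) \<in> R\<^sup>*"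
  shows "(x, y) \<in> (R - {(a, c)})\<^sup>* \<or> (x, a) \<in> (R - {(a, c)})\<^sup>* \<and> (c, y) \<in> (R - {(a, c)})\<^sup>*"
  using assms
proof (induction rule: rtrancl_induct)
  case (step y z)
  then show ?case
    by (cases "(y, z) = (a, c)") (auto intro: rtrancl_into_rtrancl)
qed simp

lemma closed_on_cycle_Diff_pair:
  assumes fw: "(R - {(a, c)}) `` X \<subseteq> X" and bw: "(R - {(a, c)})\<inverse> `` X \<subseteq> X"
    and "x \<in> X" "(x, y) \<in> R\<^sup>*" "(y, x) \<in> R\<^sup>*"
  shows "y \<in> X"
proof -
  let ?S = "R - {(a, c)}"
  have fw': "q \<in> X" if "(p, q) \<in> ?S\<^sup>*" "p \<in> X" for p q
    using Image_closed_trancl[OF fw] that by blast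
  have bw': "p \<in> X" if "(p, q) \<in> ?S\<^sup>*" "q \<in> X" for p q
    using Image_closed_trancl[OF bw] that by (blast dest: rtrancl_converseI)
  show ?thesis
    using rtrancl_Diff_pair_cases[OF \<open>(x, y) \<in> R\<^sup>*\<close>, of a c]
      rtrancl_Diff_pair_cases[OF \<open>(y, x) \<in> R\<^sup>*\<close>, of a c] \<open>x \<in> X\<close> fw' bw'
    by blast
qed

lemma darts_in_pverts: "(u, v) \<in> darts F bd \<Longrightarrow> u \<in> pverts F bd \<and> v \<in> pverts F bd"
  unfolding darts_def pverts_def by (auto dest: face_edge_mem)

lemma bface_eq_if_attained:
  assumes "\<forall>u\<in>pverts F bd. m \<le> b u" "p \<in> F" "v \<in> set (bd p)" "b v = m"
  shows "bface bd b p = m"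
  unfolding bface_def using assms by (intro Min_eqI) (auto simp: pverts_def)

lemma plane_2conn_sum_face_lengths:
  assumes "plane_2conn F bd pinf"
  shows "(\<Sum>f\<in>F. length (bd f)) = 2 * card (pedges F bd)"
proof -
  from assms have F: "finite F" "\<forall>f\<in>F. distinct (bd f) \<and> length (bd f) \<ge> 3"
    "\<forall>f\<in>F. \<forall>g\<in>F. \<forall>u v. face_edge (bd f) u v \<and> face_edge (bd g) u v \<longrightarrow> f = g"
    and sym: "\<forall>u v. (u, v) \<in> darts F bd \<longrightarrow> (v, u) \<in> darts F bd"
    unfolding plane_2conn_def by auto
  have "finite (pverts F bd)" using F(1) unfolding pverts_def by simp
  moreover have "darts F bd \<subseteq> pverts F bd \<times> pverts F bd" using darts_in_pverts by fast
  ultimately have "finite (darts F bd)" using finite_subset by blast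
  moreover have "\<forall>u v. (u, v) \<in> darts F bd \<longrightarrow> u \<noteq> v"
    using F(2) unfolding darts_def by (auto dest: face_edge_neq)
  ultimately have "card (darts F bd) = 2 * card (pedges F bd)"
    unfolding pedges_def using card_sym_irrefl_rel sym by blast
  moreover have "card (darts F bd) = (\<Sum>f\<in>F. length (bd f))"
    using F by (intro card_darts) auto
  ultimately show ?thesis by simp
qed

lemma plane_2conn_sum_bounded_face_excess:
  assumes "plane_2conn F bd pinf"
  shows "(\<Sum>p\<in>F - {pinf}. int (length (bd p)) - 2)
           = 2 * int (card (pverts F bd)) - 2 - int (length (bd pinf))"
proof -
  from assms have F: "finite F" "pinf \<in> F"
    and euler: "int (card (pverts F bd)) - int (card (pedges F bd)) + int (card F) = 2"
    unfolding plane_2conn_def by auto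
  have "(\<Sum>p\<in>F. int (length (bd p))) = 2 * int (card (pedges F bd))"
    using plane_2conn_sum_face_lengths[OF assms] by (metis of_nat_mult of_nat_numeral of_nat_sum)
  moreover have "(\<Sum>p\<in>F - {pinf}. int (length (bd p)) - 2)
      = (\<Sum>p\<in>F. int (length (bd p)) - 2) - (int (length (bd pinf)) - 2)"
    using F by (simp add: sum_diff1)
  moreover have "(\<Sum>p\<in>F. int (length (bd p)) - 2)
      = (\<Sum>p\<in>F. int (length (bd p))) - 2 * int (card F)"
    by (simp add: sum_subtractf)
  ultimately show ?thesis using euler by linarith
qed

lemma plane_2conn_edge_on_bounded_face:
  assumes "plane_2conn F bd pinf" "(u, v) \<in> darts F bd"
  shows "\<exists>f\<in>F - {pinf}. face_edge (bd f) u v \<or> face_edge (bd f) v u"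
proof -
  from assms(1) have cyc: "\<forall>f\<in>F. distinct (bd f) \<and> length (bd f) \<ge> 3"
    and sym: "\<forall>u v. (u, v) \<in> darts F bd \<longrightarrow> (v, u) \<in> darts F bd"
    unfolding plane_2conn_def by auto
  obtain f where f: "f \<in> F" "face_edge (bd f) u v" using assms(2) unfolding darts_def by blast
  obtain g where g: "g \<in> F" "face_edge (bd g) v u" using sym assms(2) unfolding darts_def by blast
  have "f \<noteq> pinf \<or> g \<noteq> pinf" using face_edge_not_reverse cyc f g by metis
  then show ?thesis using f g by blast
qed

lemma plane_2conn_rotation_bounded:
  assumes "plane_2conn F bd pinf"
  obtains a0 c0 where
    "\<And>u w. (u, w) \<in> rot_rel F bd z - {(a0, c0)} \<Longrightarrow> \<exists>f\<in>F - {pinf}. face_corner (bd f) u z w"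
proof -
  obtain a0 c0 where outer: "\<And>u w. face_corner (bd pinf) u z w \<Longrightarrow> (u, w) = (a0, c0)"
  proof (cases "\<exists>a0 c0. face_corner (bd pinf) a0 z c0")
    case True
    then obtain a0 c0 where corner: "face_corner (bd pinf) a0 z c0" by blast
    have "distinct (bd pinf)" using assms unfolding plane_2conn_def by auto
    then show ?thesis using face_corner_unique[OF _ _ corner] by (intro that) auto
  next
    case False
    then show ?thesis using that by blast
  qed
  show ?thesis
  proof (rule that[of a0 c0])
    fix u w assume "(u, w) \<in> rot_rel F bd z - {(a0, c0)}"
    then obtain f where "f \<in> F" "face_corner (bd f) u z w" "(u, w) \<noteq> (a0, c0)"
      unfolding rot_rel_def by blast
    then show "\<exists>f\<in>F - {pinf}. face_corner (bd f) u z w" using outer by blast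
  qed
qed

lemma Bval_lower_bound:
  assumes "plane_2conn F bd pinf" "\<forall>p\<in>F - {pinf}. a p = -1" "\<forall>v\<in>pverts F bd. 1 \<le> b v"
  shows "2 + int (length (bd pinf)) \<le> Bval F bd pinf a b"
proof -
  have "(\<Sum>p\<in>F - {pinf}. (int (length (bd p)) - 2) * a p)
      = - (\<Sum>p\<in>F - {pinf}. int (length (bd p)) - 2)"
    using assms(2) by (simp add: sum_negf[symmetric])
  moreover have "int (card (pverts F bd)) \<le> (\<Sum>v\<in>pverts F bd. b v)"
    using sum_mono[of "pverts F bd" "\<lambda>_. 1" b] assms(3) by simp
  ultimately show ?thesis
    unfolding Bval_def using plane_2conn_sum_bounded_face_excess[OF assms(1)] by linarith
qed

definition edges_touch_face_min :: "'f set \<Rightarrow> ('f \<Rightarrow> 'v list) \<Rightarrow> 'f \<Rightarrow> ('v \<Rightarrow> int) \<Rightarrow> bool" where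
  "edges_touch_face_min F bd pinf b \<longleftrightarrow>
     (\<forall>p\<in>F - {pinf}. \<forall>v1 v2. face_edge (bd p) v1 v2 \<longrightarrow>
        (b v1 - bface bd b p) * (b v2 - bface bd b p) = 0)"

lemma edges_touch_face_minD:
  assumes "edges_touch_face_min F bd pinf b" "p \<in> F - {pinf}" "bface bd b p = m"
    "face_edge (bd p) v1 v2 \<or> face_edge (bd p) v2 v1" "b v1 \<noteq> m"
  shows "b v2 = m"
  using assms unfolding edges_touch_face_min_def by (metis mult_eq_0_iff eq_iff_diff_eq_0)

text \<open>At a corner u z u' of a bounded face, b u = m forces bface = m and hence, as
  b z \<noteq> m, also b u' = m; the rotation at z is one cycle, and only its step along the
  unbounded face is not such a corner.\<close>
lemma neighbours_attain_min:
  assumes G: "plane_2conn F bd pinf" and touch: "edges_touch_face_min F bd pinf b"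
    and low: "\<forall>v\<in>pverts F bd. m \<le> b v"
    and "b z \<noteq> m" "(w, z) \<in> darts F bd" "b w = m" "(u, z) \<in> darts F bd"
  shows "b u = m"
proof -
  obtain a0 c0 where bounded:
    "\<And>u w. (u, w) \<in> rot_rel F bd z - {(a0, c0)} \<Longrightarrow> \<exists>f\<in>F - {pinf}. face_corner (bd f) u z w"
    using plane_2conn_rotation_bounded[OF G] by blast
  let ?X = "{u. b u = m}" and ?S = "rot_rel F bd z - {(a0, c0)}"
  have step_at_min: "b u' = m" if step: "(u, u') \<in> ?S \<or> (u', u) \<in> ?S" and "b u = m" for u u'
  proof -
    obtain f where f: "f \<in> F - {pinf}" "face_corner (bd f) u z u' \<or> face_corner (bd f) u' z u"
      using bounded step by meson
    then have edges: "face_edge (bd f) u z \<or> face_edge (bd f) z u"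
      "face_edge (bd f) z u' \<or> face_edge (bd f) u' z"
      using face_corner_face_edges[of "bd f" u z u'] face_corner_face_edges[of "bd f" u' z u]
      by blast+
    have "u \<in> set (bd f)" using edges(1) face_edge_mem[of "bd f" u z] face_edge_mem[of "bd f" z u]
      by blast
    then have "bface bd b f = m" using bface_eq_if_attained[OF low] f(1) \<open>b u = m\<close> by blast
    then show "b u' = m" by (rule edges_touch_face_minD[OF touch f(1) _ edges(2) \<open>b z \<noteq> m\<close>])
  qed
  have fw: "?S `` ?X \<subseteq> ?X" and bw: "?S\<inverse> `` ?X \<subseteq> ?X" using step_at_min by blast+
  have rot: "\<forall>v u u'. (u, v) \<in> darts F bd \<and> (u', v) \<in> darts F bd
      \<longrightarrow> (u, u') \<in> (rot_rel F bd v)\<^sup>*"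
    using G unfolding plane_2conn_def by (elim conjE)
  then have "(w, u) \<in> (rot_rel F bd z)\<^sup>*" "(u, w) \<in> (rot_rel F bd z)\<^sup>*"
    using assms(5,7) by blast+
  then show ?thesis using closed_on_cycle_Diff_pair[OF fw bw] \<open>b w = m\<close> by blast
qed

lemma bounded_faces_min_propagate:
  assumes G: "plane_2conn F bd pinf" and touch: "edges_touch_face_min F bd pinf b"
    and low: "\<forall>v\<in>pverts F bd. m \<le> b v" and wz: "(w, z) \<in> darts F bd"
    and at_w: "\<forall>f\<in>F - {pinf}. w \<in> set (bd f) \<longrightarrow> bface bd b f = m"
    and f: "f \<in> F - {pinf}" "z \<in> set (bd f)"
  shows "bface bd b f = m"
proof (cases "b z = m")
  case True
  then show ?thesis using bface_eq_if_attained[OF low] f by blast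
next
  case False
  obtain g where g: "g \<in> F - {pinf}" "face_edge (bd g) w z \<or> face_edge (bd g) z w"
    using plane_2conn_edge_on_bounded_face[OF G wz] by blast
  then have "w \<in> set (bd g)" using face_edge_mem[of "bd g" w z] face_edge_mem[of "bd g" z w] by blast
  then have "bface bd b g = m" using at_w g(1) by blast
  then have "b w = m" using g(2) False by (intro edges_touch_face_minD[OF touch g(1)]) auto
  obtain u w' where "face_corner (bd f) u z w'" using face_corner_exists[OF f(2)] by blast
  then have uz: "face_edge (bd f) u z" by (rule face_corner_face_edges(1))
  then have "(u, z) \<in> darts F bd" using f(1) unfolding darts_def by blast
  then have "b u = m" by (rule neighbours_attain_min[OF G touch low False wz \<open>b w = m\<close>])
  moreover have "u \<in> set (bd f)" using face_edge_mem[OF uz] by simp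
  ultimately show ?thesis using bface_eq_if_attained[OF low] f(1) by blast
qed

lemma bounded_faces_attain_min:
  assumes G: "plane_2conn F bd pinf" and touch: "edges_touch_face_min F bd pinf b"
    and low: "\<forall>v\<in>pverts F bd. m \<le> b v" and z0: "z0 \<in> pverts F bd" "b z0 = m"
    and p: "p \<in> F - {pinf}"
  shows "bface bd b p = m"
proof -
  let ?P = "\<lambda>z. \<forall>f\<in>F - {pinf}. z \<in> set (bd f) \<longrightarrow> bface bd b f = m"
  have "?P z" if "z \<in> pverts F bd" for z
  proof -
    have "(z0, z) \<in> {(x, y). (x, y) \<in> darts F bd \<and> x \<in> pverts F bd \<and> y \<in> pverts F bd}\<^sup>*"
      using G z0(1) that unfolding plane_2conn_def conn_on_def by blast
    then show ?thesis
    proof (induction rule: rtrancl_induct)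
      case base
      show ?case using bface_eq_if_attained[OF low] z0(2) by blast
    next
      case (step y z)
      then show ?case using bounded_faces_min_propagate[OF G touch low] by blast
    qed
  qed
  moreover have "bd p \<noteq> []" using G p unfolding plane_2conn_def by auto
  then have "hd (bd p) \<in> set (bd p)" by simp
  moreover have "set (bd p) \<subseteq> pverts F bd" using p unfolding pverts_def by auto
  ultimately show ?thesis using p by blast
qed

theorem lemma4p1:
  fixes F :: "'f set" and bd :: "'f \<Rightarrow> 'v list" and pinf :: 'f
    and a :: "'f \<Rightarrow> int" and b :: "'v \<Rightarrow> int"
  assumes G: "plane_2conn F bd pinf"
    and adm: "admissible F bd pinf a b"
    and h1: "\<exists>v v'. face_edge (bd pinf) v v' \<and> b v = 1 \<and> b v' = 1"
    and h2: "\<forall>p\<in>F - {pinf}. a p + bface bd b p = 0"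
    and h3: "\<forall>p\<in>F - {pinf}. \<forall>v1 v2. face_edge (bd p) v1 v2 \<longrightarrow>
               (b v1 - bface bd b p) * (b v2 - bface bd b p) = 0"
  shows "(\<forall>w\<in>pverts F bd. b w \<ge> 1) \<and> (\<forall>p\<in>F - {pinf}. a p = -1)
         \<and> Bval F bd pinf a b \<ge> 2 + int (card (set (bd pinf)))"
proof -
  have touch: "edges_touch_face_min F bd pinf b"
    using h3 unfolding edges_touch_face_min_def by blast
  define m where "m = Min (b ` pverts F bd)"
  have "finite F" "pinf \<in> F" "distinct (bd pinf)" "3 \<le> card (pverts F bd)"
    using G unfolding plane_2conn_def by auto
  have "pverts F bd \<noteq> {}" using \<open>3 \<le> card (pverts F bd)\<close> by auto
  moreover have "finite (pverts F bd)" using \<open>finite F\<close> by (simp add: pverts_def)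
  ultimately have low: "\<forall>v\<in>pverts F bd. m \<le> b v" and "m \<in> b ` pverts F bd"
    unfolding m_def by simp_all
  then obtain z0 where z0: "z0 \<in> pverts F bd" "b z0 = m" by blast
  have faces: "bface bd b p = m" if "p \<in> F - {pinf}" for p
    using bounded_faces_attain_min[OF G touch low z0 that] .
  obtain v v' where vv': "face_edge (bd pinf) v v'" "b v = 1" "b v' = 1" using h1 by blast
  then have "(v, v') \<in> darts F bd" using \<open>pinf \<in> F\<close> unfolding darts_def by blast
  then obtain q where q: "q \<in> F - {pinf}" "face_edge (bd q) v v' \<or> face_edge (bd q) v' v"
    using plane_2conn_edge_on_bounded_face[OF G] by blast
  have "m = 1"
  proof (rule ccontr)
    assume "m \<noteq> 1"
    then have "b v' = m" using edges_touch_face_minD[OF touch q(1) faces[OF q(1)] q(2)] vv'(2) by simp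
    then show False using vv'(3) \<open>m \<noteq> 1\<close> by simp
  qed
  then have b_ge: "\<forall>w\<in>pverts F bd. 1 \<le> b w" using low by simp
  have a_eq: "\<forall>p\<in>F - {pinf}. a p = -1"
    using h2 faces \<open>m = 1\<close> by (simp add: eq_neg_iff_add_eq_0)
  have "card (set (bd pinf)) = length (bd pinf)" using \<open>distinct (bd pinf)\<close> by (rule distinct_card)
  then show ?thesis using b_ge a_eq Bval_lower_bound[OF G a_eq b_ge] by simp
qed

end
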